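(* Consider the system $x(t+1)=x(t)-L(t)x(t)$ with $\mathbf{1}^*\mathbb{E}(L(t))=0$. Let $a^{\mathrm{ind}}_{\max}>0$ and $\alpha>0$ be constants such that almost surely $a_{ij}(t)\le a^{\mathrm{ind}}_{\max}$ for all $i\ne j$ and $a_{ii}(t)\ge\alpha$ for all $i$. Suppose that for any two distinct pairs $(i,j)\ne(k,l)$ with $i\ne j$, $k\ne l$, the random variables $a_{ij}(t)$ and $a_{kl}(t)$ are uncorrelated. Then $$\mathbb{E}[L(t)^*\mathbf{1}\mathbf{1}^*L(t)]\le\gamma\,\mathbb{E}[L(t)+L(t)^*-L(t)^*L(t)]\quad\text{with }\gamma=\frac{a^{\mathrm{ind}}_{\max}}{\alpha},$$ and consequently $\mathbb{E}[(\bar x(t)-\bar x(0))^2]\le\frac{\gamma}{N+\gamma}V(x(0))$ for all $t\ge0$.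
   Context: Let $I$ be a finite set of $N$ nodes. For each $t\in\mathbb{Z}_{\ge0}$ let $A(t)=(a_{ij}(t))_{i,j\in I}$ be a random matrix with $a_{ij}(t)\ge 0$ and $\sum_{\ell\in I}a_{i\ell}(t)=1$ for all $i$; the matrices $A(t)$ are i.i.d. in $t$. $L(t)$ is the Laplacian: $L_{ij}(t)=-a_{ij}(t)$ for $i\ne j$, $L_{ii}(t)=\sum_{j\ne i}a_{ij}(t)$. $x(0)\in\mathbb{R}^I$ is deterministic. $\mathbf{1}$ is the all-ones vector, $M^*$ the transpose; for $y\in\mathbb{R}^I$, $\bar y=\frac1N\sum_i y_i$, $V(y)=\frac1N\sum_i(y_i-\bar y)^2$. For square matrices, $A\le B$ means $A-B$ is negative semidefinite. *)

theory Defs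
  imports "HOL-Probability.Probability"
begin

text \<open>Nodes are the elements of a finite type 'n, so N = CARD('n).
  Matrices indexed by I x I are elements of real^'n^'n.\<close>

definition laplacian :: "real^'n^'n \<Rightarrow> real^'n^'n" where
  "laplacian A = (\<chi> i j. if i = j then (\<Sum>k\<in>UNIV - {i}. A $ i $ k) else - A $ i $ j)"

definition ones_vec :: "real^'n" where
  "ones_vec = (\<chi> i. 1)"

definition ones_mat :: "real^'n^'n" where
  "ones_mat = (\<chi> i j. 1)"

definition mat_expectation :: "'a measure \<Rightarrow> ('a \<Rightarrow> real^'n^'m) \<Rightarrow> real^'n^'m" where
  "mat_expectation M F = (\<chi> i j. integral\<^sup>L M (\<lambda>\<omega>. F \<omega> $ i $ j))"

definition mat_le :: "real^'n^'n \<Rightarrow> real^'n^'n \<Rightarrow> bool" where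
  "mat_le A B \<longleftrightarrow> (\<forall>v. v \<bullet> ((A - B) *v v) \<le> 0)"

definition avg :: "real^'n \<Rightarrow> real" where
  "avg y = (\<Sum>i\<in>UNIV. y $ i) / real CARD('n)"

definition Var :: "real^'n \<Rightarrow> real" where
  "Var y = (\<Sum>i\<in>UNIV. (y $ i - avg y)^2) / real CARD('n)"

primrec traj :: "(nat \<Rightarrow> 'a \<Rightarrow> real^'n^'n) \<Rightarrow> real^'n \<Rightarrow> nat \<Rightarrow> 'a \<Rightarrow> real^'n" where
  "traj A x0 0 \<omega> = x0"
| "traj A x0 (Suc t) \<omega> = traj A x0 t \<omega> - laplacian (A t \<omega>) *v traj A x0 t \<omega>"

end

theory Submission
  imports Defs
begin

(* Write gamma = amax / alpha, N = CARD('n), Q = L^T 1 1^T L and R = L + L^T - L^T L.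
   (1) Deterministic algebra.  x^T Q x = (1^T L x)^2, and |x - L x|^2 = |x|^2 - x^T R x.
       For a row-stochastic matrix with diagonal at least alpha, a weighted-variance
       argument gives  x^T R x - sum_j x_j^2 (1^T L)_j >= alpha sum_{i,j} a_ij (x_i - x_j)^2.
   (2) Matrix inequality.  Expanding E[(1^T L v)^2] with the uncorrelatedness of the
       off-diagonal weights leaves (E[1^T L v])^2 = 0 plus variances var(a_ij) <= amax E[a_ij];
       combined with (1), whose extra term has expectation 0 because 1^T E[L] = 0, this
       gives v^T E[Q] v <= gamma v^T E[R] v.
   (3) Dynamics.  x(t) depends only on A(0..t-1), hence is independent of A(t), so
       quadratic forms in x(t) can be averaged over A(t) first.  Then E[avg x(t)] is
       constant and N^2 E[avg(x(t))^2] + gamma E[|x(t)|^2] is non-increasing; together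
       with |x|^2 >= N avg(x)^2 this yields the bound gamma / (N + gamma) Var(x(0)). *)


text \<open>Needed to obtain measurability and integrability of all quantities built from
  the random matrices by continuous maps.\<close>

lemma continuous_on_if_const[continuous_intros]:
  "continuous_on S f \<Longrightarrow> continuous_on S g \<Longrightarrow> continuous_on S (\<lambda>x. if P then f x else g x)"
  by (cases P) auto

lemma continuous_on_matrix_vector_mult[continuous_intros]:
  fixes f :: "'a::topological_space \<Rightarrow> real^'n^'m"
  shows "continuous_on S f \<Longrightarrow> continuous_on S g \<Longrightarrow> continuous_on S (\<lambda>x. f x *v g x)"
  unfolding matrix_vector_mult_def by (intro continuous_intros)

lemma continuous_on_matrix_matrix_mult[continuous_intros]:
  fixes f :: "'a::topological_space \<Rightarrow> real^'n^'m"
  shows "continuous_on S f \<Longrightarrow> continuous_on S g \<Longrightarrow> continuous_on S (\<lambda>x. f x ** g x)"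
  unfolding matrix_matrix_mult_def by (intro continuous_intros)

lemma continuous_on_transpose[continuous_intros]:
  fixes f :: "'a::topological_space \<Rightarrow> real^'n^'m"
  shows "continuous_on S f \<Longrightarrow> continuous_on S (\<lambda>x. transpose (f x))"
  unfolding transpose_def by (intro continuous_intros)

lemma continuous_on_laplacian[continuous_intros]:
  fixes f :: "'a::topological_space \<Rightarrow> real^'n^'n"
  shows "continuous_on S f \<Longrightarrow> continuous_on S (\<lambda>x. laplacian (f x))"
  unfolding laplacian_def by (intro continuous_intros)

lemma continuous_on_avg[continuous_intros]:
  "continuous_on S f \<Longrightarrow> continuous_on S (\<lambda>x. avg (f x))"
  unfolding avg_def by (intro continuous_intros) auto

lemma continuous_bounded_on_ball:
  fixes \<phi> :: "'b::euclidean_space \<Rightarrow> 'c::real_normed_vector"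
  assumes "continuous_on UNIV \<phi>"
  shows "\<exists>C. \<forall>x. norm x \<le> r \<longrightarrow> norm (\<phi> x) \<le> C"
proof -
  have "compact (\<phi> ` cball 0 r)"
    by (intro compact_continuous_image continuous_on_subset[OF assms] compact_cball) auto
  then obtain C where "\<forall>y\<in>\<phi> ` cball 0 r. norm y \<le> C"
    using compact_imp_bounded bounded_iff by metis
  then have "\<forall>x. norm x \<le> r \<longrightarrow> norm (\<phi> x) \<le> C" by (simp add: mem_cball_0)
  then show ?thesis by blast
qed

lemma norm_matrix_le_entry_sum: "norm (B::real^'n^'m) \<le> (\<Sum>i\<in>UNIV. \<Sum>j\<in>UNIV. \<bar>B$i$j\<bar>)"
proof -
  have "norm B \<le> (\<Sum>i\<in>UNIV. norm (B$i))" unfolding norm_vec_def by (rule L2_set_le_sum) auto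
  also have "\<dots> \<le> (\<Sum>i\<in>UNIV. \<Sum>j\<in>UNIV. \<bar>B$i$j\<bar>)" by (intro sum_mono norm_le_l1_cart)
  finally show ?thesis .
qed


section \<open>Laplacians of weight matrices\<close>

text \<open>Off-diagonal weights: the Laplacian only depends on these.\<close>

definition offdiag :: "real^'n^'n \<Rightarrow> 'n \<Rightarrow> 'n \<Rightarrow> real" where
  "offdiag B i j = (if j = i then 0 else B$i$j)"

text \<open>The scalar 1^T L v (N times the change of the average in one step) and the
  column sums 1^T L of the Laplacian.\<close>

definition lap_sum :: "real^'n^'n \<Rightarrow> real^'n \<Rightarrow> real" where
  "lap_sum B v = (\<Sum>i\<in>UNIV. (laplacian B *v v) $ i)"

definition lap_colsum :: "real^'n^'n \<Rightarrow> 'n \<Rightarrow> real" where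
  "lap_colsum B j = (\<Sum>i\<in>UNIV. laplacian B $ i $ j)"

lemma continuous_on_offdiag[continuous_intros]:
  "continuous_on S f \<Longrightarrow> continuous_on S (\<lambda>x. offdiag (f x) i j)"
  unfolding offdiag_def by (intro continuous_intros)

lemma continuous_on_lap_sum[continuous_intros]:
  "continuous_on S f \<Longrightarrow> continuous_on S g \<Longrightarrow> continuous_on S (\<lambda>x. lap_sum (f x) (g x))"
  unfolding lap_sum_def by (intro continuous_intros)

lemma continuous_on_lap_colsum[continuous_intros]:
  "continuous_on S f \<Longrightarrow> continuous_on S (\<lambda>x. lap_colsum (f x) j)"
  unfolding lap_colsum_def by (intro continuous_intros)

lemma laplacian_mult_vec:
  "(laplacian B *v v) $ i = (\<Sum>j\<in>UNIV. offdiag B i j * (v$i - v$j))"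
proof -
  have "(laplacian B *v v) $ i = laplacian B $ i $ i * v $ i + (\<Sum>j\<in>UNIV-{i}. laplacian B $ i $ j * v $ j)"
    by (simp add: matrix_vector_mult_def sum.remove)
  also have "\<dots> = (\<Sum>j\<in>UNIV-{i}. B$i$j) * v $ i + (\<Sum>j\<in>UNIV-{i}. - B $ i $ j * v $ j)"
    by (simp add: laplacian_def)
  also have "\<dots> = (\<Sum>j\<in>UNIV-{i}. B$i$j * (v$i - v$j))"
    by (simp add: sum_distrib_right sum_distrib_left sum.distrib[symmetric] algebra_simps sum_negf)
  also have "\<dots> = (\<Sum>j\<in>UNIV. offdiag B i j * (v$i - v$j))"
    by (subst sum.remove[of UNIV i]) (auto simp: offdiag_def intro!: sum.cong)
  finally show ?thesis .
qed

lemma lap_sum_colsum: "lap_sum B v = (\<Sum>j\<in>UNIV. v$j * lap_colsum B j)"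
proof -
  have "lap_sum B v = (\<Sum>i\<in>UNIV. \<Sum>j\<in>UNIV. laplacian B $ i $ j * v $ j)"
    by (simp add: lap_sum_def matrix_vector_mult_def)
  also have "\<dots> = (\<Sum>j\<in>UNIV. \<Sum>i\<in>UNIV. laplacian B $ i $ j * v $ j)"
    by (rule sum.swap)
  finally show ?thesis by (simp add: lap_colsum_def sum_distrib_left mult.commute)
qed

lemma lap_sum_offdiag: "lap_sum B v = (\<Sum>i\<in>UNIV. \<Sum>j\<in>UNIV. offdiag B i j * (v$i - v$j))"
  unfolding lap_sum_def laplacian_mult_vec ..

lemma avg_step:
  fixes v :: "real^'n"
  shows "avg (v - laplacian B *v v) = avg v - lap_sum B v / real CARD('n)"
  by (simp add: avg_def lap_sum_def sum_subtractf diff_divide_distrib)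

definition mean_shift_mat :: "real^'n^'n \<Rightarrow> real^'n^'n" where
  "mean_shift_mat B = transpose (laplacian B) ** ones_mat ** laplacian B"

definition norm_decrease_mat :: "real^'n^'n \<Rightarrow> real^'n^'n" where
  "norm_decrease_mat B = laplacian B + transpose (laplacian B) - transpose (laplacian B) ** laplacian B"

lemma continuous_on_mean_shift_mat[continuous_intros]:
  "continuous_on S f \<Longrightarrow> continuous_on S (\<lambda>x. mean_shift_mat (f x))"
  unfolding mean_shift_mat_def by (intro continuous_intros)

lemma continuous_on_norm_decrease_mat[continuous_intros]:
  "continuous_on S f \<Longrightarrow> continuous_on S (\<lambda>x. norm_decrease_mat (f x))"
  unfolding norm_decrease_mat_def by (intro continuous_intros)

lemma quad_form_entries: "v \<bullet> (X *v v) = (\<Sum>i\<in>UNIV. \<Sum>j\<in>UNIV. v$i * v$j * X$i$j)"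
  by (simp add: inner_vec_def matrix_vector_mult_def sum_distrib_left ac_simps)

lemma quad_form_mean_shift: "v \<bullet> (mean_shift_mat B *v v) = (lap_sum B v)^2"
proof -
  let ?w = "laplacian B *v v"
  have "mean_shift_mat B *v v = transpose (laplacian B) *v (ones_mat *v ?w)"
    by (simp add: mean_shift_mat_def matrix_vector_mul_assoc matrix_mul_assoc)
  then have "v \<bullet> (mean_shift_mat B *v v) = (ones_mat *v ?w) \<bullet> ?w"
    by (simp, metis inner_commute dot_lmul_matrix)
  also have "\<dots> = (\<Sum>i\<in>UNIV. lap_sum B v * ?w $ i)"
    by (simp add: inner_vec_def ones_mat_def matrix_vector_mult_def lap_sum_def)
  also have "\<dots> = (lap_sum B v)^2"
    by (simp add: sum_distrib_left[symmetric] lap_sum_def power2_eq_square)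
  finally show ?thesis .
qed

lemma quad_form_norm_decrease:
  "v \<bullet> (norm_decrease_mat B *v v) = 2 * (v \<bullet> (laplacian B *v v)) - (laplacian B *v v) \<bullet> (laplacian B *v v)"
proof -
  let ?L = "laplacian B"
  have "v \<bullet> (norm_decrease_mat B *v v)
     = v \<bullet> (?L *v v) + v \<bullet> (transpose ?L *v v) - v \<bullet> (transpose ?L *v (?L *v v))"
    by (simp add: norm_decrease_mat_def matrix_vector_mult_add_rdistrib
        matrix_vector_mult_diff_rdistrib inner_diff_right inner_add_right matrix_vector_mul_assoc)
  also have "v \<bullet> (transpose ?L *v v) = v \<bullet> (?L *v v)"
    by (simp, metis inner_commute dot_lmul_matrix)
  also have "v \<bullet> (transpose ?L *v (?L *v v)) = (?L *v v) \<bullet> (?L *v v)"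
    by (simp, metis inner_commute dot_lmul_matrix)
  finally show ?thesis by simp
qed

lemma norm_step:
  "(v - laplacian B *v v) \<bullet> (v - laplacian B *v v) = v \<bullet> v - v \<bullet> (norm_decrease_mat B *v v)"
  unfolding quad_form_norm_decrease by (simp add: inner_diff_left inner_diff_right inner_commute)


section \<open>Row-stochastic matrices\<close>

definition stochastic :: "real^'n^'n \<Rightarrow> bool" where
  "stochastic B \<longleftrightarrow> (\<forall>i j. 0 \<le> B$i$j) \<and> (\<forall>i. (\<Sum>l\<in>UNIV. B$i$l) = 1)"

lemma stochastic_entry_bounds:
  assumes "stochastic B" shows "0 \<le> B$i$j \<and> B$i$j \<le> 1"
proof -
  have "B$i$j \<le> (\<Sum>l\<in>UNIV. B$i$l)" using assms by (intro member_le_sum) (auto simp: stochastic_def)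
  then show ?thesis using assms by (auto simp: stochastic_def)
qed

lemma stochastic_norm_bound:
  fixes B :: "real^'n^'n"
  assumes "stochastic B" shows "norm B \<le> real CARD('n) * real CARD('n)"
proof -
  have "norm B \<le> (\<Sum>i\<in>UNIV. \<Sum>j\<in>UNIV. \<bar>B$i$j\<bar>)" by (rule norm_matrix_le_entry_sum)
  also have "\<dots> \<le> (\<Sum>i\<in>(UNIV::'n set). \<Sum>j\<in>(UNIV::'n set). 1)"
    using stochastic_entry_bounds[OF assms] by (intro sum_mono) auto
  finally show ?thesis by simp
qed

lemma stochastic_step:
  assumes "stochastic B" shows "(v - laplacian B *v v) $ i = (\<Sum>j\<in>UNIV. B$i$j * v$j)"
proof -
  have "(laplacian B *v v) $ i = (\<Sum>j\<in>UNIV. B$i$j * (v$i - v$j))"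
    unfolding laplacian_mult_vec by (intro sum.cong) (auto simp: offdiag_def)
  also have "\<dots> = v$i * (\<Sum>j\<in>UNIV. B$i$j) - (\<Sum>j\<in>UNIV. B$i$j * v$j)"
    by (simp add: algebra_simps sum_subtractf sum_distrib_left)
  finally show ?thesis using assms by (simp add: stochastic_def)
qed

lemma stochastic_lap_colsum:
  assumes "stochastic B" shows "lap_colsum B j = 1 - (\<Sum>i\<in>UNIV. B$i$j)"
proof -
  have "lap_colsum B j = laplacian B $ j $ j + (\<Sum>i\<in>UNIV-{j}. laplacian B $ i $ j)"
    unfolding lap_colsum_def by (rule sum.remove) auto
  also have "\<dots> = (\<Sum>k\<in>UNIV-{j}. B$j$k) - (\<Sum>i\<in>UNIV-{j}. B$i$j)"
    by (simp add: laplacian_def sum_negf)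
  also have "(\<Sum>k\<in>UNIV-{j}. B$j$k) = 1 - B$j$j"
    using assms sum.remove[of UNIV j "\<lambda>k. B$j$k"] by (simp add: stochastic_def)
  also have "B$j$j = (\<Sum>i\<in>UNIV. B$i$j) - (\<Sum>i\<in>UNIV-{j}. B$i$j)"
    using sum.remove[of UNIV j "\<lambda>i. B$i$j"] by simp
  finally show ?thesis by simp
qed

lemma weighted_variance_pairs:
  fixes w u :: "'i \<Rightarrow> real" assumes "finite I"
  shows "(\<Sum>j\<in>I. \<Sum>k\<in>I. w j * w k * (u j - u k)^2)
     = 2 * ((\<Sum>j\<in>I. w j * (u j)^2) * (\<Sum>k\<in>I. w k)) - 2 * (\<Sum>j\<in>I. w j * u j)^2"
proof -
  have e: "\<And>j k. w j * w k * (u j - u k)^2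
      = w j * (u j)^2 * w k + w k * (u k)^2 * w j - 2 * ((w j * u j) * (w k * u k))"
    by (simp add: power2_eq_square algebra_simps)
  have "(\<Sum>j\<in>I. \<Sum>k\<in>I. w j * w k * (u j - u k)^2)
     = (\<Sum>j\<in>I. \<Sum>k\<in>I. w j * (u j)^2 * w k) + (\<Sum>j\<in>I. \<Sum>k\<in>I. w k * (u k)^2 * w j)
       - 2 * (\<Sum>j\<in>I. \<Sum>k\<in>I. (w j * u j) * (w k * u k))"
    unfolding e by (simp add: sum.distrib sum_subtractf sum_distrib_left)
  also have "(\<Sum>j\<in>I. \<Sum>k\<in>I. w k * (u k)^2 * w j) = (\<Sum>j\<in>I. \<Sum>k\<in>I. w j * (u j)^2 * w k)"
    by (rule sum.swap)
  also have "(\<Sum>j\<in>I. \<Sum>k\<in>I. w j * (u j)^2 * w k) = (\<Sum>j\<in>I. w j * (u j)^2) * (\<Sum>k\<in>I. w k)"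
    by (simp add: sum_product)
  also have "(\<Sum>j\<in>I. \<Sum>k\<in>I. (w j * u j) * (w k * u k)) = (\<Sum>j\<in>I. w j * u j)^2"
    by (simp add: sum_product power2_eq_square)
  finally show ?thesis by simp
qed

lemma double_sum_ge_row_col:
  fixes f :: "'i \<Rightarrow> 'i \<Rightarrow> real"
  assumes "finite I" "i \<in> I" "\<And>j k. f j k \<ge> 0" "f i i = 0"
  shows "(\<Sum>j\<in>I. \<Sum>k\<in>I. f j k) \<ge> (\<Sum>k\<in>I. f i k) + (\<Sum>j\<in>I. f j i)"
proof -
  have "(\<Sum>j\<in>I. \<Sum>k\<in>I. f j k) = (\<Sum>k\<in>I. f i k) + (\<Sum>j\<in>I-{i}. \<Sum>k\<in>I. f j k)"
    by (rule sum.remove[OF assms(1,2)])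
  moreover have "(\<Sum>j\<in>I-{i}. \<Sum>k\<in>I. f j k) \<ge> (\<Sum>j\<in>I-{i}. f j i)"
    using assms by (intro sum_mono member_le_sum) auto
  moreover have "(\<Sum>j\<in>I-{i}. f j i) = (\<Sum>j\<in>I. f j i)"
    using sum.remove[OF assms(1,2), of "\<lambda>j. f j i"] assms(4) by simp
  ultimately show ?thesis by linarith
qed

lemma weighted_variance_lower:
  fixes w u :: "'i \<Rightarrow> real"
  assumes "finite I" "i \<in> I" "\<And>j. w j \<ge> 0" "(\<Sum>j\<in>I. w j) = 1" "w i \<ge> \<alpha>"
  shows "(\<Sum>j\<in>I. w j * (u j)^2) - (\<Sum>j\<in>I. w j * u j)^2
           \<ge> \<alpha> * (\<Sum>j\<in>I. (if j = i then 0 else w j) * (u i - u j)^2)"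
proof -
  let ?f = "\<lambda>j k. w j * w k * (u j - u k)^2"
  have "(\<Sum>j\<in>I. \<Sum>k\<in>I. ?f j k) \<ge> (\<Sum>k\<in>I. ?f i k) + (\<Sum>j\<in>I. ?f j i)"
    using assms by (intro double_sum_ge_row_col) auto
  also have "(\<Sum>k\<in>I. ?f i k) + (\<Sum>j\<in>I. ?f j i) = 2 * (w i * (\<Sum>k\<in>I. w k * (u i - u k)^2))"
    by (simp add: sum_distrib_left power2_commute algebra_simps sum.distrib[symmetric])
  finally have row: "w i * (\<Sum>k\<in>I. w k * (u i - u k)^2)
      \<le> (\<Sum>j\<in>I. w j * (u j)^2) - (\<Sum>j\<in>I. w j * u j)^2"
    using weighted_variance_pairs[OF assms(1), of w u] assms(4) by simp
  have "0 \<le> (\<Sum>k\<in>I. (if k = i then 0 else w k) * (u i - u k)^2)"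
    using assms by (intro sum_nonneg) auto
  then have "\<alpha> * (\<Sum>k\<in>I. (if k = i then 0 else w k) * (u i - u k)^2)
      \<le> w i * (\<Sum>k\<in>I. (if k = i then 0 else w k) * (u i - u k)^2)"
    using assms(5) by (intro mult_right_mono) auto
  also have "\<dots> \<le> w i * (\<Sum>k\<in>I. w k * (u i - u k)^2)"
    using assms by (intro mult_left_mono sum_mono) auto
  finally show ?thesis using row by linarith
qed

lemma norm_decrease_lower:
  assumes B: "stochastic B" and diag: "\<And>i. \<alpha> \<le> B$i$i"
  shows "v \<bullet> (norm_decrease_mat B *v v) - (\<Sum>j\<in>UNIV. (v$j)^2 * lap_colsum B j)
         \<ge> \<alpha> * (\<Sum>i\<in>UNIV. \<Sum>j\<in>UNIV. offdiag B i j * (v$i - v$j)^2)"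
proof -
  define m where "m i = (\<Sum>j\<in>UNIV. B$i$j * v$j)" for i
  have Lv: "(laplacian B *v v) $ i = v$i - m i" for i
    using stochastic_step[OF B, of v i] by (simp add: m_def)
  have "v \<bullet> (norm_decrease_mat B *v v) - (\<Sum>j\<in>UNIV. (v$j)^2 * lap_colsum B j)
      = (\<Sum>i\<in>UNIV. 2 * (v$i * (v$i - m i)) - (v$i - m i) * (v$i - m i))
        - (\<Sum>j\<in>UNIV. (v$j)^2 * (1 - (\<Sum>i\<in>UNIV. B$i$j)))"
    unfolding quad_form_norm_decrease unfolding inner_vec_def Lv
    by (simp add: stochastic_lap_colsum[OF B] sum_subtractf sum_distrib_left)
  also have "\<dots> = (\<Sum>i\<in>UNIV. (\<Sum>j\<in>UNIV. B$i$j * (v$j)^2) - (m i)^2)"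
  proof -
    have "(\<Sum>i\<in>UNIV. 2 * (v$i * (v$i - m i)) - (v$i - m i) * (v$i - m i))
        = (\<Sum>i\<in>UNIV. (v$i)^2) - (\<Sum>i\<in>UNIV. (m i)^2)"
      by (simp add: sum_subtractf[symmetric] power2_eq_square algebra_simps)
    moreover have "(\<Sum>j\<in>UNIV. (v$j)^2 * (1 - (\<Sum>i\<in>UNIV. B$i$j)))
        = (\<Sum>j\<in>UNIV. (v$j)^2) - (\<Sum>j\<in>UNIV. \<Sum>i\<in>UNIV. B$i$j * (v$j)^2)"
      by (simp add: sum_subtractf[symmetric] sum_distrib_left algebra_simps)
    moreover have "(\<Sum>j\<in>UNIV. \<Sum>i\<in>UNIV. B$i$j * (v$j)^2) = (\<Sum>i\<in>UNIV. \<Sum>j\<in>UNIV. B$i$j * (v$j)^2)"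
      by (rule sum.swap)
    ultimately show ?thesis by (simp add: sum_subtractf)
  qed
  also have "\<dots> \<ge> (\<Sum>i\<in>UNIV. \<alpha> * (\<Sum>j\<in>UNIV. offdiag B i j * (v$i - v$j)^2))"
    unfolding m_def offdiag_def
    by (intro sum_mono weighted_variance_lower[where w="\<lambda>j. B$_$j"]) (use B diag in \<open>auto simp: stochastic_def\<close>)
  finally show ?thesis by (simp add: sum_distrib_left)
qed


section \<open>The random process\<close>

locale random_consensus = prob_space M for M :: "'a measure" +
  fixes A :: "nat \<Rightarrow> 'a \<Rightarrow> real^'n^'n" and x0 :: "real^'n"
  assumes indep: "indep_vars (\<lambda>_. borel) A UNIV"
    and stochastic_AE: "AE \<omega> in M. \<forall>t. stochastic (A t \<omega>)"
begin

abbreviation x :: "nat \<Rightarrow> 'a \<Rightarrow> real^'n" where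
  "x \<equiv> traj A x0"

lemma measurable_A[measurable]: "A t \<in> borel_measurable M"
  using indep unfolding indep_vars_def by auto

lemma continuous_step:
  "continuous_on UNIV (\<lambda>p::(real^'n^'n) \<times> (real^'n). snd p - laplacian (fst p) *v snd p)"
  by (intro continuous_intros)

lemma measurable_x: "x s \<in> borel_measurable M"
proof (induction s)
  case (Suc s)
  have "(\<lambda>\<omega>. (A s \<omega>, x s \<omega>)) \<in> borel_measurable M"
    using Suc by (subst borel_prod[symmetric]) (intro measurable_Pair measurable_A)
  from borel_measurable_continuous_on[OF continuous_step this] show ?case by simp
qed simp

definition traj_of_history :: "nat \<Rightarrow> (nat \<Rightarrow> real^'n^'n) \<Rightarrow> real^'n" where
  "traj_of_history s h = traj (\<lambda>t _. h t) x0 s ()"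

lemma traj_cong: "(\<And>t. t < s \<Longrightarrow> B t u = C t w) \<Longrightarrow> traj B y s u = traj C y s w"
  by (induction s) auto

lemma x_eq_traj_of_history: "x s \<omega> = traj_of_history s (restrict (\<lambda>i. A i \<omega>) {..<s})"
  unfolding traj_of_history_def by (rule traj_cong) auto

lemma measurable_traj_of_history:
  "s \<le> m \<Longrightarrow> traj_of_history s \<in> borel_measurable (PiM {..<m} (\<lambda>_. borel))"
proof (induction s)
  case (Suc s)
  have "(\<lambda>h. (h s, traj_of_history s h)) \<in> borel_measurable (PiM {..<m} (\<lambda>_. borel))"
    using Suc by (subst borel_prod[symmetric])
      (intro measurable_Pair measurable_component_singleton[of s "{..<m}" "\<lambda>_. borel", simplified]; simp)
  from borel_measurable_continuous_on[OF continuous_step this]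
  show ?case by (simp add: traj_of_history_def)
qed (simp add: traj_of_history_def[abs_def])

text \<open>Every coordinate of x(s) stays within the l1-norm of x(0), since each step
  takes convex combinations.\<close>

lemma traj_coordinate_bound:
  assumes "\<forall>t. stochastic (A t \<omega>)"
  shows "\<bar>x s \<omega> $ i\<bar> \<le> (\<Sum>k\<in>UNIV. \<bar>x0$k\<bar>)"
proof (induction s arbitrary: i)
  case 0 then show ?case using member_le_sum[of i UNIV "\<lambda>k. \<bar>x0$k\<bar>"] by simp
next
  case (Suc s)
  have B: "stochastic (A s \<omega>)" using assms by auto
  have "\<bar>x (Suc s) \<omega> $ i\<bar> = \<bar>\<Sum>j\<in>UNIV. A s \<omega> $i$j * x s \<omega> $ j\<bar>"
    using stochastic_step[OF B] by simp
  also have "\<dots> \<le> (\<Sum>j\<in>UNIV. A s \<omega> $i$j * (\<Sum>k\<in>UNIV. \<bar>x0$k\<bar>))"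
    using Suc stochastic_entry_bounds[OF B]
    by (intro order.trans[OF sum_abs] sum_mono) (auto simp: abs_mult intro!: mult_left_mono)
  also have "\<dots> = (\<Sum>k\<in>UNIV. \<bar>x0$k\<bar>)"
    using B by (simp add: stochastic_def sum_distrib_right[symmetric])
  finally show ?case .
qed

lemma traj_norm_bound: "AE \<omega> in M. norm (x s \<omega>) \<le> real CARD('n) * (\<Sum>k\<in>UNIV. \<bar>x0$k\<bar>)"
  using stochastic_AE
proof eventually_elim
  case (elim \<omega>)
  have "norm (x s \<omega>) \<le> (\<Sum>i\<in>UNIV. \<bar>x s \<omega> $ i\<bar>)" by (rule norm_le_l1_cart)
  also have "\<dots> \<le> (\<Sum>i\<in>(UNIV::'n set). \<Sum>k\<in>UNIV. \<bar>x0$k\<bar>)"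
    using traj_coordinate_bound[OF elim] by (intro sum_mono) auto
  finally show ?case by simp
qed

text \<open>Any continuous function of the pair (x(s), A(t)) is integrable, because the pair
  is a.s. confined to a ball.\<close>

lemma integrable_state_weights:
  fixes h :: "real^'n \<Rightarrow> real^'n^'n \<Rightarrow> real"
  assumes h: "continuous_on UNIV (\<lambda>p. h (fst p) (snd p))"
  shows "integrable M (\<lambda>\<omega>. h (x s \<omega>) (A t \<omega>))"
proof -
  define r where "r = real CARD('n) * (\<Sum>k\<in>UNIV. \<bar>x0$k\<bar>) + real CARD('n) * real CARD('n)"
  obtain C where C: "\<forall>p. norm p \<le> r \<longrightarrow> norm (h (fst p) (snd p)) \<le> C"
    using continuous_bounded_on_ball[OF h] by blast
  have "AE \<omega> in M. norm (h (x s \<omega>) (A t \<omega>)) \<le> C"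
    using traj_norm_bound[of s] stochastic_AE
  proof eventually_elim
    case (elim \<omega>)
    have "norm (x s \<omega>, A t \<omega>) \<le> norm (x s \<omega>) + norm (A t \<omega>)" by (rule norm_Pair_le)
    also have "\<dots> \<le> r" using elim stochastic_norm_bound[of "A t \<omega>"] by (auto simp: r_def)
    finally show ?case using C by fastforce
  qed
  moreover have "(\<lambda>\<omega>. (x s \<omega>, A t \<omega>)) \<in> borel_measurable M"
    by (subst borel_prod[symmetric]) (intro measurable_Pair measurable_A measurable_x)
  from borel_measurable_continuous_on[OF h this]
  have "(\<lambda>\<omega>. h (x s \<omega>) (A t \<omega>)) \<in> borel_measurable M" by simp
  ultimately show ?thesis by (intro integrable_const_bound) auto
qed

lemma integrable_state:
  fixes f :: "real^'n \<Rightarrow> real"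
  shows "continuous_on UNIV f \<Longrightarrow> integrable M (\<lambda>\<omega>. f (x s \<omega>))"
  using integrable_state_weights[of "\<lambda>v B. f v" s 0]
  by (simp add: continuous_on_compose2[OF _ continuous_on_fst[OF continuous_on_id]])

lemma integrable_weights:
  fixes g :: "real^'n^'n \<Rightarrow> real"
  shows "continuous_on UNIV g \<Longrightarrow> integrable M (\<lambda>\<omega>. g (A t \<omega>))"
  using integrable_state_weights[of "\<lambda>v B. g B" 0 t]
  by (simp add: continuous_on_compose2[OF _ continuous_on_snd[OF continuous_on_id]])

text \<open>Key consequence of independence: x(s) is a function of A(0), ..., A(s-1) and
  therefore independent of A(s).\<close>

lemma integral_state_weights_indep:
  fixes f :: "real^'n \<Rightarrow> real" and g :: "real^'n^'n \<Rightarrow> real"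
  assumes f: "continuous_on UNIV f" and g: "continuous_on UNIV g"
  shows "(\<integral>\<omega>. f (x s \<omega>) * g (A s \<omega>) \<partial>M) = (\<integral>\<omega>. f (x s \<omega>) \<partial>M) * (\<integral>\<omega>. g (A s \<omega>) \<partial>M)"
proof -
  have history: "indep_var (PiM {..<s} (\<lambda>_. borel)) (\<lambda>\<omega>. restrict (\<lambda>i. A i \<omega>) {..<s})
                      (PiM {s} (\<lambda>_. borel)) (\<lambda>\<omega>. restrict (\<lambda>i. A i \<omega>) {s})"
    by (rule indep_var_restrict[OF indep]) auto
  have mf: "(\<lambda>h. f (traj_of_history s h)) \<in> borel_measurable (PiM {..<s} (\<lambda>_. borel))"
    by (intro borel_measurable_continuous_on[OF f] measurable_traj_of_history) simp
  have mg: "(\<lambda>h. g (h s)) \<in> borel_measurable (PiM {s} (\<lambda>_. borel))"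
    by (intro borel_measurable_continuous_on[OF g]
        measurable_component_singleton[of s "{s}" "\<lambda>_. borel", simplified]) simp
  have "indep_var borel ((\<lambda>h. f (traj_of_history s h)) \<circ> (\<lambda>\<omega>. restrict (\<lambda>i. A i \<omega>) {..<s}))
                   borel ((\<lambda>h. g (h s)) \<circ> (\<lambda>\<omega>. restrict (\<lambda>i. A i \<omega>) {s}))"
    by (rule indep_var_compose[OF history mf mg])
  then have "indep_var borel (\<lambda>\<omega>. f (x s \<omega>)) borel (\<lambda>\<omega>. g (A s \<omega>))"
    by (simp add: comp_def x_eq_traj_of_history)
  then show ?thesis
    by (intro indep_var_lebesgue_integral integrable_state integrable_weights f g)
qed

lemma integral_double_sum:
  fixes g :: "'i \<Rightarrow> 'j \<Rightarrow> 'a \<Rightarrow> real"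
  assumes "\<And>i j. integrable M (g i j)"
  shows "(\<integral>\<omega>. (\<Sum>i\<in>I. \<Sum>j\<in>J. g i j \<omega>) \<partial>M) = (\<Sum>i\<in>I. \<Sum>j\<in>J. integral\<^sup>L M (g i j))"
  using assms by (simp add: Bochner_Integration.integral_sum Bochner_Integration.integrable_sum)

lemma quad_form_mat_expectation:
  assumes F: "continuous_on UNIV F"
  shows "v \<bullet> (mat_expectation M (\<lambda>\<omega>. F (A t \<omega>)) *v v) = (\<integral>\<omega>. v \<bullet> (F (A t \<omega>) *v v) \<partial>M)"
proof -
  have "integrable M (\<lambda>\<omega>. v$i * v$j * F (A t \<omega>) $ i $ j)" for i j
    by (intro integrable_mult_right integrable_weights continuous_intros F)
  then show ?thesis
    unfolding quad_form_entries by (subst integral_double_sum) (simp_all add: mat_expectation_def)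
qed

lemma quad_form_state_indep:
  assumes F: "continuous_on UNIV F"
  shows "(\<integral>\<omega>. x s \<omega> \<bullet> (F (A s \<omega>) *v x s \<omega>) \<partial>M)
       = (\<integral>\<omega>. x s \<omega> \<bullet> (mat_expectation M (\<lambda>\<omega>. F (A s \<omega>)) *v x s \<omega>) \<partial>M)"
proof -
  have factor: "(\<integral>\<omega>. x s \<omega> $ i * x s \<omega> $ j * F (A s \<omega>) $ i $ j \<partial>M)
      = (\<integral>\<omega>. x s \<omega> $ i * x s \<omega> $ j \<partial>M) * (\<integral>\<omega>. F (A s \<omega>) $ i $ j \<partial>M)" for i j
    by (rule integral_state_weights_indep) (intro continuous_intros F)+
  have F_snd: "continuous_on UNIV (\<lambda>p. F (snd p))"
    by (rule continuous_on_compose2[OF F]) (intro continuous_intros, simp)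
  have "integrable M (\<lambda>\<omega>. x s \<omega> $ i * x s \<omega> $ j * F (A s \<omega>) $ i $ j)" for i j
    by (rule integrable_state_weights[where h="\<lambda>v B. v $ i * v $ j * F B $ i $ j"])
      (intro continuous_intros F_snd)
  moreover have "integrable M (\<lambda>\<omega>. x s \<omega> $ i * x s \<omega> $ j * c)" for i j c
    by (intro integrable_mult_left integrable_state continuous_intros)
  ultimately show ?thesis
    unfolding quad_form_entries by (simp add: integral_double_sum factor mat_expectation_def)
qed

end


lemma sum_over_pairs: "(\<Sum>i\<in>UNIV. \<Sum>j\<in>UNIV. g i j) = (\<Sum>p\<in>UNIV. g (fst p) (snd p))"
  by (subst sum.cartesian_product) (simp add: split_def)


section \<open>The matrix inequality\<close>

locale uncorrelated_consensus = random_consensus M A x0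
  for M :: "'a measure" and A :: "nat \<Rightarrow> 'a \<Rightarrow> real^'n^'n" and x0 :: "real^'n" +
  fixes amax \<alpha> :: real
  assumes amax_pos: "amax > 0" and alpha_pos: "\<alpha> > 0"
    and offdiag_le_AE: "AE \<omega> in M. \<forall>t i j. i \<noteq> j \<longrightarrow> A t \<omega> $ i $ j \<le> amax"
    and diag_ge_AE: "AE \<omega> in M. \<forall>t i. \<alpha> \<le> A t \<omega> $ i $ i"
    and zero_col: "\<And>t. ones_vec v* mat_expectation M (\<lambda>\<omega>. laplacian (A t \<omega>)) = 0"
    and uncorr: "\<And>t i j k l. i \<noteq> j \<Longrightarrow> k \<noteq> l \<Longrightarrow> (i, j) \<noteq> (k, l) \<Longrightarrow>
        integral\<^sup>L M (\<lambda>\<omega>. A t \<omega> $ i $ j * A t \<omega> $ k $ l)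
        = integral\<^sup>L M (\<lambda>\<omega>. A t \<omega> $ i $ j) * integral\<^sup>L M (\<lambda>\<omega>. A t \<omega> $ k $ l)"
begin

lemma integral_lap_colsum_zero: "(\<integral>\<omega>. lap_colsum (A t \<omega>) j \<partial>M) = 0"
proof -
  have "0 = (ones_vec v* mat_expectation M (\<lambda>\<omega>. laplacian (A t \<omega>))) $ j" using zero_col by simp
  also have "\<dots> = (\<Sum>i\<in>UNIV. \<integral>\<omega>. laplacian (A t \<omega>) $ i $ j \<partial>M)"
    by (simp add: vector_matrix_mult_def ones_vec_def mat_expectation_def)
  also have "\<dots> = (\<integral>\<omega>. lap_colsum (A t \<omega>) j \<partial>M)"
    unfolding lap_colsum_def
    by (rule Bochner_Integration.integral_sum[symmetric]) (intro integrable_weights continuous_intros)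
  finally show ?thesis by simp
qed

lemma integral_lap_sum_zero: "(\<integral>\<omega>. lap_sum (A t \<omega>) v \<partial>M) = 0"
  unfolding lap_sum_colsum
  by (subst Bochner_Integration.integral_sum)
    (auto intro!: integrable_mult_right integrable_weights continuous_intros simp: integral_lap_colsum_zero)

lemma integrable_offdiag_product: "integrable M (\<lambda>\<omega>. offdiag (A t \<omega>) i j * offdiag (A t \<omega>) k l)"
  by (intro integrable_weights continuous_intros)

lemma offdiag_second_moment:
  "(\<integral>\<omega>. offdiag (A t \<omega>) (fst p) (snd p) * offdiag (A t \<omega>) (fst q) (snd q) \<partial>M)
   = (\<integral>\<omega>. offdiag (A t \<omega>) (fst p) (snd p) \<partial>M) * (\<integral>\<omega>. offdiag (A t \<omega>) (fst q) (snd q) \<partial>M)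
     + (if p = q then (\<integral>\<omega>. offdiag (A t \<omega>) (fst p) (snd p) * offdiag (A t \<omega>) (fst p) (snd p) \<partial>M)
                       - (\<integral>\<omega>. offdiag (A t \<omega>) (fst p) (snd p) \<partial>M)^2 else 0)"
proof (cases "p = q")
  case True then show ?thesis by (simp add: power2_eq_square)
next
  case False
  obtain i j k l where p: "p = (i,j)" and q: "q = (k,l)" by (cases p, cases q) auto
  show ?thesis
  proof (cases "i = j \<or> k = l")
    case True then show ?thesis using False by (auto simp: p q offdiag_def)
  next
    case distinct: False
    then have "(i, j) \<noteq> (k, l)" "j \<noteq> i" "l \<noteq> k" using False p q by auto
    then show ?thesis using distinct False uncorr[of i j k l t] by (auto simp: p q offdiag_def)
  qed
qed

lemma offdiag_second_moment_le:
  "(\<integral>\<omega>. offdiag (A t \<omega>) i j * offdiag (A t \<omega>) i j \<partial>M) \<le> amax * (\<integral>\<omega>. offdiag (A t \<omega>) i j \<partial>M)"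
proof -
  have "(\<integral>\<omega>. offdiag (A t \<omega>) i j * offdiag (A t \<omega>) i j \<partial>M) \<le> (\<integral>\<omega>. amax * offdiag (A t \<omega>) i j \<partial>M)"
  proof (rule integral_mono_AE)
    show "AE \<omega> in M. offdiag (A t \<omega>) i j * offdiag (A t \<omega>) i j \<le> amax * offdiag (A t \<omega>) i j"
      using stochastic_AE offdiag_le_AE
      by eventually_elim (auto simp: offdiag_def stochastic_def intro!: mult_right_mono)
  qed (auto intro!: integrable_mult_right integrable_weights continuous_intros)
  then show ?thesis by simp
qed

text \<open>The expected edge energy sum_{i,j} E[a_ij] (v_i - v_j)^2, the quantity both sides of
  the matrix inequality are compared with.\<close>

definition edge_energy :: "nat \<Rightarrow> real^'n \<Rightarrow> real" where
  "edge_energy t v = (\<Sum>i\<in>UNIV. \<Sum>j\<in>UNIV. (\<integral>\<omega>. offdiag (A t \<omega>) i j \<partial>M) * (v$i - v$j)^2)"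

lemma mean_shift_form_le_edge_energy:
  "v \<bullet> (mat_expectation M (\<lambda>\<omega>. mean_shift_mat (A t \<omega>)) *v v) \<le> amax * edge_energy t v"
proof -
  define w where "w p \<omega> = offdiag (A t \<omega>) (fst p) (snd p)" for p \<omega>
  define d where "d p = v$fst p - v$snd p" for p :: "'n \<times> 'n"
  define a where "a p = (\<integral>\<omega>. w p \<omega> \<partial>M)" for p
  define c where "c p = (\<integral>\<omega>. w p \<omega> * w p \<omega> \<partial>M) - (a p)^2" for p
  have S: "lap_sum (A t \<omega>) v = (\<Sum>p\<in>UNIV. w p \<omega> * d p)" for \<omega>
    unfolding lap_sum_offdiag sum_over_pairs w_def d_def ..
  have mean_zero: "(\<Sum>p\<in>UNIV. d p * a p) = 0"
  proof -
    have "(\<Sum>p\<in>UNIV. d p * a p) = (\<integral>\<omega>. lap_sum (A t \<omega>) v \<partial>M)"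
      unfolding S a_def w_def
      by (subst Bochner_Integration.integral_sum)
        (auto intro!: integrable_weights continuous_intros simp: ac_simps)
    then show ?thesis by (simp add: integral_lap_sum_zero)
  qed
  have "v \<bullet> (mat_expectation M (\<lambda>\<omega>. mean_shift_mat (A t \<omega>)) *v v) = (\<integral>\<omega>. (lap_sum (A t \<omega>) v)^2 \<partial>M)"
    unfolding quad_form_mat_expectation[OF continuous_on_mean_shift_mat[OF continuous_on_id]]
    by (simp add: quad_form_mean_shift)
  also have "\<dots> = (\<integral>\<omega>. (\<Sum>p\<in>UNIV. \<Sum>q\<in>UNIV. d p * d q * (w p \<omega> * w q \<omega>)) \<partial>M)"
    unfolding S power2_eq_square sum_product by (simp add: ac_simps)
  also have "\<dots> = (\<Sum>p\<in>UNIV. \<Sum>q\<in>UNIV. d p * d q * (\<integral>\<omega>. w p \<omega> * w q \<omega> \<partial>M))"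
    by (subst integral_double_sum)
      (auto simp: w_def intro!: integrable_mult_right integrable_offdiag_product)
  also have "\<dots> = (\<Sum>p\<in>UNIV. \<Sum>q\<in>UNIV. d p * d q * (a p * a q) + (if q = p then d p * d p * c p else 0))"
    unfolding a_def c_def w_def by (intro sum.cong refl) (subst offdiag_second_moment, auto simp: algebra_simps)
  also have "\<dots> = (\<Sum>p\<in>UNIV. d p * a p)^2 + (\<Sum>p\<in>UNIV. d p * d p * c p)"
    by (simp add: sum.distrib power2_eq_square sum_product ac_simps)
  also have "\<dots> \<le> (\<Sum>p\<in>UNIV. d p * d p * (amax * a p))"
  proof -
    have "c p \<le> amax * a p" for p
      using offdiag_second_moment_le[of t "fst p" "snd p"] zero_le_power2[of "a p"]
      unfolding c_def a_def w_def by linarith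
    then show ?thesis unfolding mean_zero by (auto intro!: sum_mono mult_left_mono)
  qed
  also have "\<dots> = amax * edge_energy t v"
    unfolding edge_energy_def sum_over_pairs a_def w_def d_def
    by (simp add: sum_distrib_left power2_eq_square ac_simps)
  finally show ?thesis .
qed

lemma edge_energy_le_norm_decrease_form:
  "\<alpha> * edge_energy t v \<le> v \<bullet> (mat_expectation M (\<lambda>\<omega>. norm_decrease_mat (A t \<omega>)) *v v)"
proof -
  define corr where "corr B = (\<Sum>j\<in>UNIV. (v$j)^2 * lap_colsum B j)" for B
  have int_corr: "integrable M (\<lambda>\<omega>. corr (A t \<omega>))"
    unfolding corr_def by (intro integrable_weights continuous_intros)
  have int_R: "integrable M (\<lambda>\<omega>. v \<bullet> (norm_decrease_mat (A t \<omega>) *v v))"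
    by (intro integrable_weights continuous_intros)
  have corr_zero: "(\<integral>\<omega>. corr (A t \<omega>) \<partial>M) = 0"
    unfolding corr_def
    by (subst Bochner_Integration.integral_sum)
      (auto intro!: integrable_mult_right integrable_weights continuous_intros simp: integral_lap_colsum_zero)
  have "\<alpha> * edge_energy t v
      = (\<integral>\<omega>. \<alpha> * (\<Sum>i\<in>UNIV. \<Sum>j\<in>UNIV. offdiag (A t \<omega>) i j * (v$i - v$j)^2) \<partial>M)"
    unfolding edge_energy_def
    by (subst integral_mult_right_zero, subst integral_double_sum)
      (auto intro!: integrable_mult_left integrable_weights continuous_intros)
  also have "\<dots> \<le> (\<integral>\<omega>. v \<bullet> (norm_decrease_mat (A t \<omega>) *v v) - corr (A t \<omega>) \<partial>M)"
  proof (rule integral_mono_AE)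
    show "AE \<omega> in M. \<alpha> * (\<Sum>i\<in>UNIV. \<Sum>j\<in>UNIV. offdiag (A t \<omega>) i j * (v$i - v$j)^2)
        \<le> v \<bullet> (norm_decrease_mat (A t \<omega>) *v v) - corr (A t \<omega>)"
      using stochastic_AE diag_ge_AE
      by eventually_elim (unfold corr_def, rule norm_decrease_lower, auto)
  qed (use int_corr int_R in \<open>auto intro!: integrable_weights continuous_intros\<close>)
  also have "\<dots> = v \<bullet> (mat_expectation M (\<lambda>\<omega>. norm_decrease_mat (A t \<omega>)) *v v)"
    unfolding quad_form_mat_expectation[OF continuous_on_norm_decrease_mat[OF continuous_on_id]]
    using int_corr int_R corr_zero by simp
  finally show ?thesis .
qed

lemma expected_matrix_inequality:
  "v \<bullet> (mat_expectation M (\<lambda>\<omega>. mean_shift_mat (A t \<omega>)) *v v)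
    \<le> (amax / \<alpha>) * (v \<bullet> (mat_expectation M (\<lambda>\<omega>. norm_decrease_mat (A t \<omega>)) *v v))"
proof -
  have "amax * edge_energy t v = (amax / \<alpha>) * (\<alpha> * edge_energy t v)" using alpha_pos by simp
  also have "\<dots> \<le> (amax / \<alpha>) * (v \<bullet> (mat_expectation M (\<lambda>\<omega>. norm_decrease_mat (A t \<omega>)) *v v))"
    using edge_energy_le_norm_decrease_form amax_pos alpha_pos by (intro mult_left_mono) auto
  finally show ?thesis using mean_shift_form_le_edge_energy by (rule order.trans[rotated])
qed

end


section \<open>Mean-square deviation of the average\<close>

context uncorrelated_consensus
begin

lemma x_Suc: "x (Suc t) \<omega> = x t \<omega> - laplacian (A t \<omega>) *v x t \<omega>"
  by simp

text \<open>Since 1^T E[L(t)] = 0 and x(t) is independent of A(t), any expression that is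
  linear in the column sums 1^T L(t), with coefficients depending on x(t), has mean 0.\<close>

lemma integral_colsum_combination_zero:
  fixes f :: "'n \<Rightarrow> real^'n \<Rightarrow> real"
  assumes f: "\<And>j. continuous_on UNIV (f j)"
  shows "(\<integral>\<omega>. (\<Sum>j\<in>UNIV. f j (x t \<omega>) * lap_colsum (A t \<omega>) j) \<partial>M) = 0"
proof -
  have f_fst: "continuous_on UNIV (\<lambda>p. f j (fst p))" for j
    by (rule continuous_on_compose2[OF f]) (intro continuous_intros, simp)
  have "(\<integral>\<omega>. (\<Sum>j\<in>UNIV. f j (x t \<omega>) * lap_colsum (A t \<omega>) j) \<partial>M)
      = (\<Sum>j\<in>UNIV. \<integral>\<omega>. f j (x t \<omega>) * lap_colsum (A t \<omega>) j \<partial>M)"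
    by (intro Bochner_Integration.integral_sum integrable_state_weights[where h="\<lambda>v B. f _ v * lap_colsum B _"])
      (intro continuous_intros f_fst)
  also have "\<dots> = (\<Sum>j\<in>UNIV. (\<integral>\<omega>. f j (x t \<omega>) \<partial>M) * (\<integral>\<omega>. lap_colsum (A t \<omega>) j \<partial>M))"
    by (intro sum.cong refl integral_state_weights_indep f continuous_intros)
  finally show ?thesis by (simp add: integral_lap_colsum_zero)
qed

lemma expected_avg: "(\<integral>\<omega>. avg (x t \<omega>) \<partial>M) = avg x0"
proof (induction t)
  case (Suc t)
  have "(\<integral>\<omega>. lap_sum (A t \<omega>) (x t \<omega>) \<partial>M) = 0"
  proof -
    have "continuous_on UNIV (\<lambda>v::real^'n. v $ j)" for j by (intro continuous_intros)
    from integral_colsum_combination_zero[OF this, of t] show ?thesis by (simp only: lap_sum_colsum)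
  qed
  moreover have "integrable M (\<lambda>\<omega>. lap_sum (A t \<omega>) (x t \<omega>))"
    by (rule integrable_state_weights[where h="\<lambda>v B. lap_sum B v"]) (intro continuous_intros)
  moreover have "integrable M (\<lambda>\<omega>. avg (x t \<omega>))"
    by (intro integrable_state continuous_intros)
  ultimately show ?case using Suc by (simp only: x_Suc avg_step) simp
qed (simp add: prob_space)

lemma mean_shift_energy_bound:
  "(\<integral>\<omega>. (lap_sum (A t \<omega>) (x t \<omega>))^2 \<partial>M)
   \<le> (amax / \<alpha>) * ((\<integral>\<omega>. x t \<omega> \<bullet> x t \<omega> \<partial>M) - (\<integral>\<omega>. x (Suc t) \<omega> \<bullet> x (Suc t) \<omega> \<partial>M))"
proof -
  let ?EQ = "mat_expectation M (\<lambda>\<omega>. mean_shift_mat (A t \<omega>))"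
  let ?ER = "mat_expectation M (\<lambda>\<omega>. norm_decrease_mat (A t \<omega>))"
  have Q: "continuous_on UNIV mean_shift_mat" and R: "continuous_on UNIV norm_decrease_mat"
    by (intro continuous_intros)+
  have "(\<integral>\<omega>. (lap_sum (A t \<omega>) (x t \<omega>))^2 \<partial>M) = (\<integral>\<omega>. x t \<omega> \<bullet> (?EQ *v x t \<omega>) \<partial>M)"
    by (simp add: quad_form_mean_shift quad_form_state_indep[OF Q, symmetric])
  also have "\<dots> \<le> (\<integral>\<omega>. (amax / \<alpha>) * (x t \<omega> \<bullet> (?ER *v x t \<omega>)) \<partial>M)"
    by (intro integral_mono expected_matrix_inequality integrable_state continuous_intros)
  also have "\<dots> = (amax / \<alpha>) * (\<integral>\<omega>. x t \<omega> \<bullet> (norm_decrease_mat (A t \<omega>) *v x t \<omega>) \<partial>M)"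
    by (simp add: quad_form_state_indep[OF R])
  also have "(\<integral>\<omega>. x t \<omega> \<bullet> (norm_decrease_mat (A t \<omega>) *v x t \<omega>) \<partial>M)
      = (\<integral>\<omega>. x t \<omega> \<bullet> x t \<omega> \<partial>M) - (\<integral>\<omega>. x (Suc t) \<omega> \<bullet> x (Suc t) \<omega> \<partial>M)"
  proof -
    have "integrable M (\<lambda>\<omega>. x t \<omega> \<bullet> x t \<omega>)" by (intro integrable_state continuous_intros)
    moreover have "integrable M (\<lambda>\<omega>. x t \<omega> \<bullet> (norm_decrease_mat (A t \<omega>) *v x t \<omega>))"
      by (rule integrable_state_weights[where h="\<lambda>v B. v \<bullet> (norm_decrease_mat B *v v)"])
        (intro continuous_intros)
    ultimately show ?thesis by (simp only: x_Suc norm_step) simp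
  qed
  finally show ?thesis .
qed

lemma potential_step:
  "(real CARD('n))^2 * (\<integral>\<omega>. (avg (x (Suc t) \<omega>))^2 \<partial>M) + (amax / \<alpha>) * (\<integral>\<omega>. x (Suc t) \<omega> \<bullet> x (Suc t) \<omega> \<partial>M)
   \<le> (real CARD('n))^2 * (\<integral>\<omega>. (avg (x t \<omega>))^2 \<partial>M) + (amax / \<alpha>) * (\<integral>\<omega>. x t \<omega> \<bullet> x t \<omega> \<partial>M)"
proof -
  define N where "N = real CARD('n)"
  have N: "N > 0" unfolding N_def by simp
  let ?a = "\<lambda>\<omega>. avg (x t \<omega>)"
  let ?Z = "\<lambda>\<omega>. lap_sum (A t \<omega>) (x t \<omega>)"
  have cross_zero: "(\<integral>\<omega>. ?a \<omega> * ?Z \<omega> \<partial>M) = 0"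
  proof -
    have "continuous_on UNIV (\<lambda>v::real^'n. avg v * v $ j)" for j by (intro continuous_intros)
    from integral_colsum_combination_zero[OF this, of t]
    show ?thesis by (simp only: lap_sum_colsum sum_distrib_left mult.assoc)
  qed
  have "integrable M (\<lambda>\<omega>. (?a \<omega>)^2)" by (intro integrable_state continuous_intros)
  moreover have "integrable M (\<lambda>\<omega>. ?a \<omega> * ?Z \<omega>)"
    by (rule integrable_state_weights[where h="\<lambda>v B. avg v * lap_sum B v"]) (intro continuous_intros)
  moreover have "integrable M (\<lambda>\<omega>. (?Z \<omega>)^2)"
    by (rule integrable_state_weights[where h="\<lambda>v B. (lap_sum B v)^2"]) (intro continuous_intros)
  moreover have "N^2 * (avg (x (Suc t) \<omega>))^2 = N^2 * (?a \<omega>)^2 - (2 * N) * (?a \<omega> * ?Z \<omega>) + (?Z \<omega>)^2" for \<omega>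
    unfolding x_Suc avg_step N_def[symmetric] using N by (simp add: power2_eq_square field_simps)
  then have "(\<integral>\<omega>. N^2 * (avg (x (Suc t) \<omega>))^2 \<partial>M)
      = (\<integral>\<omega>. N^2 * (?a \<omega>)^2 - (2 * N) * (?a \<omega> * ?Z \<omega>) + (?Z \<omega>)^2 \<partial>M)"
    by (intro Bochner_Integration.integral_cong) auto
  ultimately have "N^2 * (\<integral>\<omega>. (avg (x (Suc t) \<omega>))^2 \<partial>M)
      = N^2 * (\<integral>\<omega>. (?a \<omega>)^2 \<partial>M) + (\<integral>\<omega>. (?Z \<omega>)^2 \<partial>M)"
    using cross_zero by simp
  then show ?thesis using mean_shift_energy_bound[of t] unfolding N_def by (simp add: algebra_simps)
qed

lemma potential_bound:
  "(real CARD('n))^2 * (\<integral>\<omega>. (avg (x t \<omega>))^2 \<partial>M) + (amax / \<alpha>) * (\<integral>\<omega>. x t \<omega> \<bullet> x t \<omega> \<partial>M)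
   \<le> (real CARD('n))^2 * (avg x0)^2 + (amax / \<alpha>) * (x0 \<bullet> x0)"
proof (induction t)
  case (Suc t) then show ?case using potential_step[of t] by linarith
qed (simp add: prob_space)

lemma Var_eq: "real CARD('n) * Var y = y \<bullet> y - real CARD('n) * (avg y)^2"
  for y :: "real^'n"
proof -
  have s: "(\<Sum>i\<in>UNIV. y$i) = real CARD('n) * avg y" by (simp add: avg_def)
  have "(\<Sum>i\<in>UNIV. (y$i - avg y)^2)
      = (\<Sum>i\<in>UNIV. (y$i)^2) - 2 * avg y * (\<Sum>i\<in>UNIV. y$i) + real CARD('n) * (avg y)^2"
    by (simp add: power2_diff sum.distrib sum_subtractf algebra_simps sum_distrib_left)
  also have "\<dots> = y \<bullet> y - real CARD('n) * (avg y)^2"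
    by (simp add: s inner_vec_def power2_eq_square algebra_simps)
  finally show ?thesis by (simp add: Var_def)
qed

lemma Var_nonneg: "0 \<le> Var y"
  unfolding Var_def by (intro divide_nonneg_nonneg sum_nonneg) auto

text \<open>Part (b): combine the Lyapunov bound with E[avg x(t)] = avg x(0) and
  |x|^2 >= N avg(x)^2.\<close>

lemma deviation_bound:
  "(\<integral>\<omega>. (avg (x t \<omega>) - avg x0)^2 \<partial>M) \<le> (amax / \<alpha>) / (real CARD('n) + amax / \<alpha>) * Var x0"
proof -
  define N where "N = real CARD('n)"
  define g where "g = amax / \<alpha>"
  define m where "m = avg x0"
  define P where "P = (\<integral>\<omega>. (avg (x t \<omega>))^2 \<partial>M)"
  define E where "E = (\<integral>\<omega>. x t \<omega> \<bullet> x t \<omega> \<partial>M)"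
  have N: "N > 0" and g: "g > 0" using amax_pos alpha_pos by (auto simp: N_def g_def)
  have int_avg: "integrable M (\<lambda>\<omega>. avg (x t \<omega>))"
    and int_avg2: "integrable M (\<lambda>\<omega>. (avg (x t \<omega>))^2)"
    and int_norm: "integrable M (\<lambda>\<omega>. x t \<omega> \<bullet> x t \<omega>)"
    by (intro integrable_state continuous_intros)+
  have D: "(\<integral>\<omega>. (avg (x t \<omega>) - m)^2 \<partial>M) = P - m^2"
  proof -
    have "(\<integral>\<omega>. (avg (x t \<omega>) - m)^2 \<partial>M) = (\<integral>\<omega>. (avg (x t \<omega>))^2 - 2 * m * avg (x t \<omega>) + m^2 \<partial>M)"
      by (intro Bochner_Integration.integral_cong) (auto simp: power2_diff)
    also have "\<dots> = P - 2 * m * m + m^2"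
      using int_avg int_avg2 expected_avg[of t] by (simp add: P_def m_def prob_space)
    finally show ?thesis by (simp add: power2_eq_square)
  qed
  have norm_ge: "N * P \<le> E"
  proof -
    have "(\<integral>\<omega>. N * (avg (x t \<omega>))^2 \<partial>M) \<le> E"
      unfolding E_def
    proof (rule integral_mono)
      fix \<omega>
      have "0 \<le> N * Var (x t \<omega>)" using N by (intro mult_nonneg_nonneg Var_nonneg) simp
      then show "N * (avg (x t \<omega>))^2 \<le> x t \<omega> \<bullet> x t \<omega>"
        using Var_eq[of "x t \<omega>"] unfolding N_def by linarith
    qed (use int_avg2 int_norm in simp_all)
    then show ?thesis by (simp add: P_def)
  qed
  have "N^2 * P + g * E \<le> N^2 * m^2 + g * (N * Var x0 + N * m^2)"
    using potential_bound[of t] Var_eq[of x0] unfolding N_def g_def m_def P_def E_def by simp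
  moreover have "g * (N * P) \<le> g * E" using norm_ge g by simp
  ultimately have "N * ((N + g) * (P - m^2)) \<le> N * (g * Var x0)"
    by (simp add: algebra_simps power2_eq_square)
  then have "(N + g) * (P - m^2) \<le> g * Var x0"
    using N by simp
  then have "P - m^2 \<le> g / (N + g) * Var x0"
    using N g by (simp add: field_simps)
  then show ?thesis using D unfolding N_def g_def m_def by simp
qed

end


lemma mat_le_scaleR_intro:
  fixes X Y :: "real^'n^'n"
  assumes "\<And>v. v \<bullet> (X *v v) \<le> c * (v \<bullet> (Y *v v))"
  shows "mat_le X (c *\<^sub>R Y)"
  unfolding mat_le_def
proof
  fix v :: "real^'n"
  have "(X - c *\<^sub>R Y) *v v = X *v v - c *\<^sub>R (Y *v v)"
    by (simp add: matrix_vector_mult_diff_rdistrib scaleR_matrix_vector_assoc)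
  then show "v \<bullet> ((X - c *\<^sub>R Y) *v v) \<le> 0" using assms[of v] by (simp add: inner_diff_right)
qed

theorem theorem4:
  fixes M :: "'a measure"
    and A :: "nat \<Rightarrow> 'a \<Rightarrow> real^'n^'n"
    and x0 :: "real^'n"
    and amax \<alpha> :: real
  assumes "prob_space M"
    and indep: "prob_space.indep_vars M (\<lambda>_. borel) A UNIV"
    and ident: "\<And>t. distr M borel (A t) = distr M borel (A 0)"
    and nonneg: "\<And>t. AE \<omega> in M. \<forall>i j. A t \<omega> $ i $ j \<ge> 0"
    and rowsum: "\<And>t. AE \<omega> in M. \<forall>i. (\<Sum>l\<in>UNIV. A t \<omega> $ i $ l) = 1"
    and zero_col: "\<And>t. ones_vec v* mat_expectation M (\<lambda>\<omega>. laplacian (A t \<omega>)) = 0"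
    and amax_pos: "amax > 0" and alpha_pos: "\<alpha> > 0"
    and amax_bd: "\<And>t. AE \<omega> in M. \<forall>i j. i \<noteq> j \<longrightarrow> A t \<omega> $ i $ j \<le> amax"
    and alpha_bd: "\<And>t. AE \<omega> in M. \<forall>i. A t \<omega> $ i $ i \<ge> \<alpha>"
    and uncorr: "\<And>t i j k l. i \<noteq> j \<Longrightarrow> k \<noteq> l \<Longrightarrow> (i, j) \<noteq> (k, l) \<Longrightarrow>
        integral\<^sup>L M (\<lambda>\<omega>. A t \<omega> $ i $ j * A t \<omega> $ k $ l)
        = integral\<^sup>L M (\<lambda>\<omega>. A t \<omega> $ i $ j) * integral\<^sup>L M (\<lambda>\<omega>. A t \<omega> $ k $ l)"
  shows "(\<forall>t. mat_le
            (mat_expectation M (\<lambda>\<omega>. transpose (laplacian (A t \<omega>)) ** ones_mat ** laplacian (A t \<omega>)))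
            ((amax / \<alpha>) *\<^sub>R mat_expectation M (\<lambda>\<omega>. laplacian (A t \<omega>) + transpose (laplacian (A t \<omega>))
                 - transpose (laplacian (A t \<omega>)) ** laplacian (A t \<omega>))))
       \<and> (\<forall>t. integral\<^sup>L M (\<lambda>\<omega>. (avg (traj A x0 t \<omega>) - avg x0)^2)
              \<le> (amax / \<alpha>) / (real CARD('n) + amax / \<alpha>) * Var x0)"
proof -
  interpret prob_space M by fact
  \<comment> \<open>The per-time almost-sure hypotheses hold simultaneously for all t (countable union).\<close>
  interpret uncorrelated_consensus M A x0 amax \<alpha>
  proof unfold_locales
    show "AE \<omega> in M. \<forall>t. stochastic (A t \<omega>)"
      using nonneg rowsum by (simp add: AE_all_countable stochastic_def)
    show "AE \<omega> in M. \<forall>t i j. i \<noteq> j \<longrightarrow> A t \<omega> $ i $ j \<le> amax"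
      using amax_bd by (simp add: AE_all_countable)
    show "AE \<omega> in M. \<forall>t i. \<alpha> \<le> A t \<omega> $ i $ i"
      using alpha_bd by (simp add: AE_all_countable)
  qed (use indep zero_col amax_pos alpha_pos uncorr in auto)
  show ?thesis
    using expected_matrix_inequality deviation_bound
    by (auto intro!: mat_le_scaleR_intro simp: mean_shift_mat_def norm_decrease_mat_def)
qed

end
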